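(* Let $M$ be a von Neumann algebra and let $a\in M$ with $0\le a\le 1$. Then an element $b\in M$ with $0\le b\le 1$ commutes with $a$ if, and only if, there exist $b_1,b_2,b_3\in M$ with $0\le b_1\le s(a)$, $0\le b_2\le r(e(a))$ and $0\le b_3\le n(a)$ such that $b_2$ commutes with $e(a)$ and $b=b_1+b_2+b_3$.
   Context: For a positive element $x$ of a von Neumann algebra $M$, $r(x)$ denotes its range projection (smallest projection $p$ with $px=x$). For $0\le a\le 1$ in $M$: the support projection is $s(a)=1-r(1-a)$ (the largest projection $p\in M$ with $pa=p$); the almost strict part is $e(a)=a-s(a)$; and $n(a)=1-r(a)$. The projections $s(a)$, $r(e(a))$, $n(a)$ are mutually orthogonal with sum $1$. *)

theory Defs
  imports Complex_Main
begin

class complex_vector = ab_group_add +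
  fixes scaleC :: "complex \<Rightarrow> 'a \<Rightarrow> 'a"
  assumes scaleC_add_right: "scaleC c (x + y) = scaleC c x + scaleC c y"
    and scaleC_add_left: "scaleC (c + d) x = scaleC c x + scaleC d x"
    and scaleC_scaleC: "scaleC c (scaleC d x) = scaleC (c * d) x"
    and scaleC_one: "scaleC 1 x = x"

class complex_inner = complex_vector +
  fixes cinner :: "'a \<Rightarrow> 'a \<Rightarrow> complex"
  assumes cinner_commute: "cinner x y = cnj (cinner y x)"
    and cinner_add_left: "cinner (x + y) z = cinner x z + cinner y z"
    and cinner_scaleC_left: "cinner (scaleC c x) y = cnj c * cinner x y"
    and cinner_self_real: "Im (cinner x x) = 0"
    and cinner_self_nonneg: "0 \<le> Re (cinner x x)"
    and cinner_self_eq_zero: "cinner x x = 0 \<longleftrightarrow> x = 0"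

definition hnorm :: "'a::complex_inner \<Rightarrow> real" where
  "hnorm x = sqrt (Re (cinner x x))"

class chilbert_space = complex_inner +
  assumes hnorm_complete:
    "(\<forall>e>0. \<exists>N::nat. \<forall>m\<ge>N. \<forall>n\<ge>N. sqrt (Re (cinner (X m - X n) (X m - X n))) < e) \<Longrightarrow>
     (\<exists>L. \<forall>e>0. \<exists>N::nat. \<forall>n\<ge>N. sqrt (Re (cinner (X n - L) (X n - L))) < e)"

definition bounded_op :: "('h::chilbert_space \<Rightarrow> 'h) \<Rightarrow> bool" where
  "bounded_op T \<longleftrightarrow>
     (\<forall>x y. T (x + y) = T x + T y) \<and> (\<forall>c x. T (scaleC c x) = scaleC c (T x)) \<and>
     (\<exists>K. \<forall>x. hnorm (T x) \<le> K * hnorm x)"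

definition adj :: "('h::chilbert_space \<Rightarrow> 'h) \<Rightarrow> ('h \<Rightarrow> 'h)" where
  "adj T = (SOME S. \<forall>x y. cinner (T x) y = cinner x (S y))"

definition op_zero :: "'h::chilbert_space \<Rightarrow> 'h" where
  "op_zero = (\<lambda>x. 0)"

definition op_add :: "('h::chilbert_space \<Rightarrow> 'h) \<Rightarrow> ('h \<Rightarrow> 'h) \<Rightarrow> ('h \<Rightarrow> 'h)" where
  "op_add A B = (\<lambda>x. A x + B x)"

definition op_sub :: "('h::chilbert_space \<Rightarrow> 'h) \<Rightarrow> ('h \<Rightarrow> 'h) \<Rightarrow> ('h \<Rightarrow> 'h)" where
  "op_sub A B = (\<lambda>x. A x - B x)"

definition op_pos :: "('h::chilbert_space \<Rightarrow> 'h) \<Rightarrow> bool" where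
  "op_pos T \<longleftrightarrow> (\<forall>x. Im (cinner (T x) x) = 0 \<and> 0 \<le> Re (cinner (T x) x))"

definition op_le :: "('h::chilbert_space \<Rightarrow> 'h) \<Rightarrow> ('h \<Rightarrow> 'h) \<Rightarrow> bool" where
  "op_le A B \<longleftrightarrow> op_pos (op_sub B A)"

definition commutant :: "('h::chilbert_space \<Rightarrow> 'h) set \<Rightarrow> ('h \<Rightarrow> 'h) set" where
  "commutant S = {T. bounded_op T \<and> (\<forall>A\<in>S. T \<circ> A = A \<circ> T)}"

definition von_neumann_algebra :: "('h::chilbert_space \<Rightarrow> 'h) set \<Rightarrow> bool" where
  "von_neumann_algebra M \<longleftrightarrow>
     M \<subseteq> {T. bounded_op T} \<and> id \<in> M \<and>
     (\<forall>A\<in>M. \<forall>B\<in>M. op_add A B \<in> M \<and> A \<circ> B \<in> M) \<and>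
     (\<forall>c. \<forall>A\<in>M. (\<lambda>x. scaleC c (A x)) \<in> M) \<and>
     (\<forall>A\<in>M. adj A \<in> M) \<and>
     commutant (commutant M) = M"

definition is_proj_in :: "('h::chilbert_space \<Rightarrow> 'h) set \<Rightarrow> ('h \<Rightarrow> 'h) \<Rightarrow> bool" where
  "is_proj_in M p \<longleftrightarrow> p \<in> M \<and> p \<circ> p = p \<and> adj p = p"

definition range_proj :: "('h::chilbert_space \<Rightarrow> 'h) set \<Rightarrow> ('h \<Rightarrow> 'h) \<Rightarrow> ('h \<Rightarrow> 'h)" where
  "range_proj M x = (THE p. is_proj_in M p \<and> p \<circ> x = x \<and>
       (\<forall>q. is_proj_in M q \<and> q \<circ> x = x \<longrightarrow> op_le p q))"

definition supp_proj :: "('h::chilbert_space \<Rightarrow> 'h) set \<Rightarrow> ('h \<Rightarrow> 'h) \<Rightarrow> ('h \<Rightarrow> 'h)" where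
  "supp_proj M a = op_sub id (range_proj M (op_sub id a))"

definition as_part :: "('h::chilbert_space \<Rightarrow> 'h) set \<Rightarrow> ('h \<Rightarrow> 'h) \<Rightarrow> ('h \<Rightarrow> 'h)" where
  "as_part M a = op_sub a (supp_proj M a)"

definition null_proj :: "('h::chilbert_space \<Rightarrow> 'h) set \<Rightarrow> ('h \<Rightarrow> 'h) \<Rightarrow> ('h \<Rightarrow> 'h)" where
  "null_proj M a = op_sub id (range_proj M a)"

end

theory Submission
  imports Defs
begin

text \<open>
  Write \<open>s = s(a)\<close>, \<open>n = n(a)\<close> and \<open>r = r(e(a))\<close>. The range projection of a self-adjoint
  \<open>x \<in> M\<close> is \<open>1\<close> minus the orthogonal projection onto \<open>ker x\<close>; it lies in \<open>M\<close> by the bicommutant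
  property, since every operator commuting with \<open>x\<close> commutes with that projection. Hence \<open>s\<close> and
  \<open>n\<close> project onto the eigenspaces \<open>ker (1 - a)\<close> and \<open>ker a\<close>, and as \<open>ker e(a)\<close> is their
  orthogonal sum, \<open>r = 1 - s - n\<close>. If \<open>b\<close> commutes with \<open>a\<close> it commutes with \<open>s\<close>, \<open>n\<close> and \<open>e(a)\<close>,
  hence with \<open>r\<close>, and \<open>b = b s + b r + b n\<close> is the required decomposition. Conversely
  \<open>0 \<le> c \<le> p\<close> for a projection \<open>p\<close> forces \<open>c = p c p\<close>; since \<open>a s = s\<close>, \<open>a n = 0\<close> and
  \<open>a r = e(a)\<close>, each summand commutes with \<open>a\<close>.
\<close>

section \<open>Inner product spaces\<close>

lemma scaleC_zero_left [simp]: "scaleC 0 (x::'a::complex_vector) = 0"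
proof -
  have "scaleC 0 x = scaleC 0 x + scaleC 0 x" using scaleC_add_left[of 0 0 x] by simp
  thus ?thesis by simp
qed

lemma scaleC_zero_right [simp]: "scaleC c (0::'a::complex_vector) = 0"
proof -
  have "scaleC c (0::'a) = scaleC c 0 + scaleC c 0" using scaleC_add_right[of c 0 0] by simp
  thus ?thesis by simp
qed

lemma scaleC_minus_right: "scaleC c (- (x::'a::complex_vector)) = - scaleC c x"
proof -
  have "scaleC c x + scaleC c (- x) = 0" using scaleC_add_right[of c x "-x"] by simp
  thus ?thesis by (simp add: add_eq_0_iff)
qed

lemma scaleC_diff_right: "scaleC c ((x::'a::complex_vector) - y) = scaleC c x - scaleC c y"
  using scaleC_add_right[of c x "-y"] by (simp add: scaleC_minus_right)

lemma scaleC_minus_left: "scaleC (- c) (x::'a::complex_vector) = - scaleC c x"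
proof -
  have "scaleC c x + scaleC (- c) x = 0" using scaleC_add_left[of c "-c" x] by simp
  thus ?thesis by (simp add: add_eq_0_iff)
qed

lemma scaleC_minus1: "scaleC (-1) (x::'a::complex_vector) = - x"
  by (simp add: scaleC_minus_left scaleC_one)

lemma scaleC_two: "scaleC 2 (x::'a::complex_vector) = x + x"
  using scaleC_add_left[of 1 1 x] by (simp add: scaleC_one)

lemma cinner_add_right: "cinner (x::'a::complex_inner) (y + z) = cinner x y + cinner x z"
  by (metis cinner_add_left cinner_commute complex_cnj_add)

lemma cinner_scaleC_right: "cinner (x::'a::complex_inner) (scaleC c y) = c * cinner x y"
  by (metis cinner_commute cinner_scaleC_left complex_cnj_cnj complex_cnj_mult)

lemma cinner_zero_left [simp]: "cinner (0::'a::complex_inner) y = 0"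
  using cinner_add_left[of "0::'a" 0 y] by simp

lemma cinner_zero_right [simp]: "cinner (x::'a::complex_inner) 0 = 0"
  using cinner_add_right[of x 0 0] by simp

lemma cinner_minus_left: "cinner (- (x::'a::complex_inner)) y = - cinner x y"
proof -
  have "cinner x y + cinner (-x) y = 0" using cinner_add_left[of x "-x" y] by simp
  thus ?thesis by (simp add: add_eq_0_iff)
qed

lemma cinner_minus_right: "cinner (x::'a::complex_inner) (- y) = - cinner x y"
proof -
  have "cinner x y + cinner x (-y) = 0" using cinner_add_right[of x y "-y"] by simp
  thus ?thesis by (simp add: add_eq_0_iff)
qed

lemma cinner_diff_left: "cinner ((x::'a::complex_inner) - y) z = cinner x z - cinner y z"
  using cinner_add_left[of x "-y" z] by (simp add: cinner_minus_left)

lemma cinner_diff_right: "cinner (x::'a::complex_inner) (y - z) = cinner x y - cinner x z"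
  using cinner_add_right[of x y "-z"] by (simp add: cinner_minus_right)

lemma cinner_eq_zero_sym: "cinner (x::'a::complex_inner) y = 0 \<longleftrightarrow> cinner y x = 0"
  by (metis cinner_commute complex_cnj_zero)

lemma cinner_self_of_real: "cinner (x::'a::complex_inner) x = complex_of_real (Re (cinner x x))"
  using cinner_self_real[of x] by (simp add: complex_eq_iff)

lemma Re_cinner_self_eq_zero: "Re (cinner (x::'a::complex_inner) x) = 0 \<longleftrightarrow> x = 0"
  by (metis cinner_self_of_real cinner_self_eq_zero of_real_0 zero_complex.simps(1))

lemma cinner_ext: "(\<And>u. cinner u a = cinner u (b::'a::complex_inner)) \<Longrightarrow> a = b"
proof -
  assume h: "\<And>u. cinner u a = cinner u b"
  have "cinner (a - b) (a - b) = 0" using h[of "a - b"] by (simp add: cinner_diff_right)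
  thus ?thesis using cinner_self_eq_zero by (metis eq_iff_diff_eq_0)
qed

lemma Re_cinner_self_add:
  "Re (cinner ((x::'a::complex_inner) + y) (x + y)) =
     Re (cinner x x) + Re (cinner y y) + 2 * Re (cinner x y)"
proof -
  have "cinner (x + y) (x + y) = cinner x x + cinner y y + (cinner x y + cinner y x)"
    by (simp add: cinner_add_left cinner_add_right)
  moreover have "cinner y x = cnj (cinner x y)" by (rule cinner_commute)
  ultimately show ?thesis by simp
qed

lemma Re_cinner_self_scaleC:
  "Re (cinner (scaleC c (z::'a::complex_inner)) (scaleC c z)) = (cmod c)^2 * Re (cinner z z)"
proof -
  have "cinner (scaleC c z) (scaleC c z) = (c * cnj c) * cinner z z"
    by (simp add: cinner_scaleC_left cinner_scaleC_right algebra_simps)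
  also have "c * cnj c = complex_of_real ((cmod c)^2)" by (metis complex_norm_square)
  finally show ?thesis by simp
qed

lemma parallelogram_law:
  "Re (cinner ((a::'a::complex_inner) - b) (a - b)) + Re (cinner (a + b) (a + b)) =
     2 * Re (cinner a a) + 2 * Re (cinner b b)"
  using Re_cinner_self_add[of a b] Re_cinner_self_add[of a "-b"]
  by (simp add: cinner_minus_left cinner_minus_right)

lemma power2_hnorm: "(hnorm (x::'a::complex_inner))^2 = Re (cinner x x)"
  unfolding hnorm_def using cinner_self_nonneg[of x] by simp

lemma hnorm_nonneg: "0 \<le> hnorm (x::'a::complex_inner)"
  unfolding hnorm_def using cinner_self_nonneg[of x] by simp

lemma hnorm_eq_zero: "hnorm (x::'a::complex_inner) = 0 \<longleftrightarrow> x = 0"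
  unfolding hnorm_def using Re_cinner_self_eq_zero[of x] cinner_self_nonneg[of x] by simp

lemma hnorm_minus: "hnorm (- (x::'a::complex_inner)) = hnorm x"
  unfolding hnorm_def by (simp add: cinner_minus_left cinner_minus_right)

lemma cauchy_schwarz: "cmod (cinner (x::'a::complex_inner) y) \<le> hnorm x * hnorm y"
proof (cases "y = 0")
  case True
  thus ?thesis by (simp add: hnorm_nonneg)
next
  case False
  define B where "B = Re (cinner y y)"
  have B: "B > 0"
    unfolding B_def using False Re_cinner_self_eq_zero cinner_self_nonneg by (metis less_eq_real_def)
  define t where "t = cinner y x / complex_of_real B"
  have yy: "cinner y y = complex_of_real B" unfolding B_def by (rule cinner_self_of_real)
  have xy: "cinner x y = cnj (cinner y x)" by (rule cinner_commute)
  have "0 \<le> Re (cinner (x - scaleC t y) (x - scaleC t y))" by (rule cinner_self_nonneg)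
  also have "cinner (x - scaleC t y) (x - scaleC t y) =
      cinner x x - t * cinner x y - cnj t * cinner y x + cnj t * t * cinner y y"
    by (simp add: cinner_diff_left cinner_diff_right cinner_scaleC_left cinner_scaleC_right
        algebra_simps)
  also have "\<dots> = cinner x x - cinner y x * cnj (cinner y x) / complex_of_real B"
    using B unfolding t_def yy xy by (simp add: field_simps)
  finally have "0 \<le> Re (cinner x x) - (cmod (cinner y x))^2 / B"
    unfolding complex_norm_square[symmetric] of_real_divide[symmetric] by simp
  hence "(cmod (cinner y x))^2 \<le> Re (cinner x x) * B" using B by (simp add: field_simps)
  also have "\<dots> = (hnorm x * hnorm y)^2" by (simp add: power_mult_distrib power2_hnorm B_def)
  finally have "(cmod (cinner x y))^2 \<le> (hnorm x * hnorm y)^2" by (metis xy complex_mod_cnj)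
  thus ?thesis using hnorm_nonneg by (meson mult_nonneg_nonneg power2_le_imp_le)
qed

lemma hnorm_triangle: "hnorm ((x::'a::complex_inner) + y) \<le> hnorm x + hnorm y"
proof -
  have "(hnorm (x + y))^2 = (hnorm x)^2 + (hnorm y)^2 + 2 * Re (cinner x y)"
    by (simp add: power2_hnorm Re_cinner_self_add)
  also have "Re (cinner x y) \<le> hnorm x * hnorm y"
    using cauchy_schwarz[of x y] complex_Re_le_cmod order_trans by blast
  hence "(hnorm x)^2 + (hnorm y)^2 + 2 * Re (cinner x y) \<le> (hnorm x + hnorm y)^2"
    by (simp add: power2_sum)
  finally show ?thesis using hnorm_nonneg by (meson add_nonneg_nonneg power2_le_imp_le)
qed

section \<open>Orthogonal projection onto a closed subspace\<close>

definition hconv :: "(nat \<Rightarrow> 'a::complex_inner) \<Rightarrow> 'a \<Rightarrow> bool" where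
  "hconv X L \<longleftrightarrow> (\<forall>e>0. \<exists>N. \<forall>n\<ge>N. hnorm (X n - L) < e)"

definition csubspace :: "'a::complex_vector set \<Rightarrow> bool" where
  "csubspace K \<longleftrightarrow> 0 \<in> K \<and> (\<forall>x\<in>K. \<forall>y\<in>K. x + y \<in> K) \<and> (\<forall>c. \<forall>x\<in>K. scaleC c x \<in> K)"

definition hclosed :: "'a::complex_inner set \<Rightarrow> bool" where
  "hclosed K \<longleftrightarrow> (\<forall>X L. (\<forall>n. X n \<in> K) \<longrightarrow> hconv X L \<longrightarrow> L \<in> K)"

definition orth :: "'a::complex_inner set \<Rightarrow> 'a \<Rightarrow> bool" where
  "orth K y \<longleftrightarrow> (\<forall>k\<in>K. cinner k y = 0)"

lemma csubspace_zero: "csubspace K \<Longrightarrow> 0 \<in> K"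
  unfolding csubspace_def by blast

lemma csubspace_add: "csubspace K \<Longrightarrow> x \<in> K \<Longrightarrow> y \<in> K \<Longrightarrow> x + y \<in> K"
  unfolding csubspace_def by blast

lemma csubspace_scaleC: "csubspace K \<Longrightarrow> x \<in> K \<Longrightarrow> scaleC c x \<in> K"
  unfolding csubspace_def by blast

lemma csubspace_diff: "csubspace K \<Longrightarrow> x \<in> K \<Longrightarrow> y \<in> K \<Longrightarrow> x - y \<in> K"
  using csubspace_add[of K x "-y"] csubspace_scaleC[of K y "-1"] by (simp add: scaleC_minus1)

lemma orth_add: "orth K x \<Longrightarrow> orth K y \<Longrightarrow> orth K (x + y)"
  unfolding orth_def by (simp add: cinner_add_right)

lemma orth_diff: "orth K x \<Longrightarrow> orth K y \<Longrightarrow> orth K (x - y)"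
  unfolding orth_def by (simp add: cinner_diff_right)

lemma orth_scaleC: "orth K x \<Longrightarrow> orth K (scaleC c x)"
  unfolding orth_def by (simp add: cinner_scaleC_right)

lemma orth_zero: "orth K 0"
  unfolding orth_def by simp

lemma orth_in_eq_zero: "orth K x \<Longrightarrow> x \<in> K \<Longrightarrow> x = 0"
  unfolding orth_def using cinner_self_eq_zero by blast

lemma orth_cinner_left: "orth K x \<Longrightarrow> k \<in> K \<Longrightarrow> cinner x k = 0"
  unfolding orth_def using cinner_eq_zero_sym by blast

lemma linear_coeff_zero_if_nonneg:
  fixes A B :: real
  assumes "\<forall>t. 0 \<le> 2 * t * A + t^2 * B"
  shows "A = 0"
proof (rule ccontr)
  assume A: "A \<noteq> 0"
  define C where "C = \<bar>B\<bar> + 1"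
  have C: "C > 0" "B - 2 * C < 0" unfolding C_def by (simp_all add: abs_if)
  have "0 \<le> 2 * (- A / C) * A + (- A / C)^2 * B" using assms by blast
  also have "\<dots> = (A^2 / C^2) * (B - 2 * C)"
    using C by (simp add: field_simps power2_eq_square)
  also have "\<dots> < 0" using A C by (intro mult_pos_neg) simp_all
  finally show False by simp
qed

lemma orth_if_norm_minimal:
  fixes w k :: "'a::complex_inner"
  assumes "\<forall>c. Re (cinner w w) \<le> Re (cinner (w - scaleC c k) (w - scaleC c k))"
  shows "cinner k w = 0"
proof -
  have expand: "Re (cinner (w - scaleC c k) (w - scaleC c k)) =
      Re (cinner w w) + (cmod c)^2 * Re (cinner k k) - 2 * Re (c * cinner w k)" for c
    using Re_cinner_self_add[of w "- scaleC c k"] Re_cinner_self_scaleC[of c k]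
    by (simp add: cinner_minus_left cinner_minus_right cinner_scaleC_right)
  have re: "\<forall>t. 0 \<le> 2 * t * (- Re (cinner w k)) + t^2 * Re (cinner k k)"
  proof
    fix t :: real
    show "0 \<le> 2 * t * (- Re (cinner w k)) + t^2 * Re (cinner k k)"
      using assms[rule_format, of "complex_of_real t"] unfolding expand
      by (simp add: power2_eq_square)
  qed
  have im: "\<forall>t. 0 \<le> 2 * t * Im (cinner w k) + t^2 * Re (cinner k k)"
  proof
    fix t :: real
    have "(cmod (complex_of_real t * \<i>))^2 = t^2" by (simp add: norm_mult)
    thus "0 \<le> 2 * t * Im (cinner w k) + t^2 * Re (cinner k k)"
      using assms[rule_format, of "complex_of_real t * \<i>"] unfolding expand
      by (simp add: power2_eq_square)
  qed
  have "cinner w k = 0"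
    using linear_coeff_zero_if_nonneg[OF re] linear_coeff_zero_if_nonneg[OF im]
    by (simp add: complex_eq_iff)
  thus ?thesis using cinner_eq_zero_sym by blast
qed

lemma near_minimizers_close:
  fixes y :: "'a::complex_inner"
  assumes K: "csubspace K" and D: "\<forall>k\<in>K. D \<le> Re (cinner (y - k) (y - k))"
    and a: "a \<in> K" "Re (cinner (y - a) (y - a)) \<le> D + \<alpha>"
    and b: "b \<in> K" "Re (cinner (y - b) (y - b)) \<le> D + \<beta>"
  shows "Re (cinner (a - b) (a - b)) \<le> 2 * \<alpha> + 2 * \<beta>"
proof -
  define m where "m = scaleC (1/2) (a + b)"
  have "m \<in> K" unfolding m_def using K a b csubspace_add csubspace_scaleC by blast
  hence "4 * D \<le> 4 * Re (cinner (y - m) (y - m))" using D by simp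
  also have "\<dots> = Re (cinner ((y - a) + (y - b)) ((y - a) + (y - b)))"
  proof -
    have "(y - a) + (y - b) = scaleC 2 (y - m)"
      unfolding m_def scaleC_diff_right by (simp add: scaleC_scaleC scaleC_one scaleC_two)
    thus ?thesis by (simp add: Re_cinner_self_scaleC)
  qed
  finally show ?thesis
    using parallelogram_law[of "y - a" "y - b"] a b
      cinner_minus_left[of "a - b"] cinner_minus_right[of "- (a - b)" "a - b"]
    by (simp add: algebra_simps)
qed

lemma cauchy_if_near_minimizers:
  fixes y :: "'a::complex_inner"
  assumes K: "csubspace K" and D: "\<forall>k\<in>K. D \<le> Re (cinner (y - k) (y - k))"
    and kK: "\<And>n. kk n \<in> K"
    and kD: "\<And>n. Re (cinner (y - kk n) (y - kk n)) < D + 1 / (real n + 1)"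
  shows "\<forall>e>0. \<exists>N. \<forall>m\<ge>N. \<forall>n\<ge>N. hnorm (kk m - kk n) < e"
proof (intro allI impI)
  fix e :: real
  assume e: "e > 0"
  obtain N :: nat where N: "4 / e^2 < real N" using reals_Archimedean2 by blast
  have "hnorm (kk m - kk n) < e" if "N \<le> m" "N \<le> n" for m n
  proof -
    have "Re (cinner (kk m - kk n) (kk m - kk n)) \<le> 2 / (real m + 1) + 2 / (real n + 1)"
      using near_minimizers_close[OF K D kK[of m] _ kK[of n]] kD less_imp_le by fastforce
    also have "\<dots> \<le> 2 / (real N + 1) + 2 / (real N + 1)"
      using that by (intro add_mono) (simp_all add: frac_le)
    also have "\<dots> = 4 / (real N + 1)" by simp
    also have "\<dots> < e^2"
    proof -
      have "4 / e^2 < real N + 1" using N by simp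
      thus ?thesis using e by (simp add: field_simps)
    qed
    finally have "(hnorm (kk m - kk n))^2 < e^2" unfolding power2_hnorm .
    thus ?thesis using e by (simp add: power2_less_imp_less)
  qed
  thus "\<exists>N. \<forall>m\<ge>N. \<forall>n\<ge>N. hnorm (kk m - kk n) < e" by blast
qed

lemma limit_of_near_minimizers:
  fixes y :: "'a::complex_inner"
  assumes L: "hconv kk L" and D: "0 \<le> D"
    and kD: "\<And>n. Re (cinner (y - kk n) (y - kk n)) < D + 1 / (real n + 1)"
  shows "Re (cinner (y - L) (y - L)) \<le> D"
proof (rule ccontr)
  assume "\<not> ?thesis"
  hence "hnorm (y - L) > sqrt D" unfolding hnorm_def by simp
  define \<delta> where "\<delta> = hnorm (y - L) - sqrt D"
  have \<delta>: "\<delta> > 0" using \<open>hnorm (y - L) > sqrt D\<close> unfolding \<delta>_def by simp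
  obtain N1 where N1: "\<forall>n\<ge>N1. hnorm (kk n - L) < \<delta> / 2"
    using L \<delta> unfolding hconv_def by (meson half_gt_zero)
  obtain N2 :: nat where N2: "4 / \<delta>^2 < real N2" using reals_Archimedean2 by blast
  define n where "n = max N1 N2"
  have close: "hnorm (kk n - L) < \<delta> / 2" using N1 unfolding n_def by simp
  have "4 / \<delta>^2 < real n + 1" using N2 unfolding n_def by simp
  hence "1 / (real n + 1) < (\<delta> / 2)^2" using \<delta> by (simp add: field_simps power2_eq_square)
  hence small: "sqrt (1 / (real n + 1)) < \<delta> / 2"
    using \<delta> by (metis abs_of_pos half_gt_zero real_sqrt_abs real_sqrt_less_mono)
  have "hnorm (y - L) \<le> hnorm (y - kk n) + hnorm (kk n - L)"
    using hnorm_triangle[of "y - kk n" "kk n - L"] by simp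
  also have "hnorm (y - kk n) \<le> sqrt (D + 1 / (real n + 1))"
    unfolding hnorm_def using kD[of n] by simp
  also have "\<dots> \<le> sqrt D + sqrt (1 / (real n + 1))"
    using D by (intro sqrt_add_le_add_sqrt) auto
  finally have "hnorm (y - L) < sqrt D + \<delta> / 2 + \<delta> / 2"
    using close small by linarith
  thus False unfolding \<delta>_def by simp
qed

lemma projection_exists:
  fixes y :: "'a::chilbert_space"
  assumes K: "csubspace K" and cl: "hclosed K"
  shows "\<exists>v\<in>K. orth K (y - v)"
proof -
  define dist2 where "dist2 = (\<lambda>k. Re (cinner (y - k) (y - k)))"
  define D where "D = Inf (dist2 ` K)"
  have bdd: "bdd_below (dist2 ` K)"
    unfolding bdd_below_def dist2_def using cinner_self_nonneg by blast
  have ne: "dist2 ` K \<noteq> {}" using csubspace_zero[OF K] by blast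
  have D_le: "\<forall>k\<in>K. D \<le> dist2 k" unfolding D_def using bdd by (simp add: cInf_lower)
  have D0: "0 \<le> D"
    unfolding D_def using ne bdd by (simp add: le_cInf_iff dist2_def cinner_self_nonneg)
  have "\<forall>n::nat. \<exists>k\<in>K. dist2 k < D + 1 / (real n + 1)"
  proof
    fix n :: nat
    have "Inf (dist2 ` K) < D + 1 / (real n + 1)" unfolding D_def by simp
    thus "\<exists>k\<in>K. dist2 k < D + 1 / (real n + 1)" using cInf_lessD[OF ne] by blast
  qed
  then obtain kk where kK: "\<And>n. kk n \<in> K" and kD: "\<And>n. dist2 (kk n) < D + 1 / (real n + 1)"
    by metis
  obtain L where L: "hconv kk L"
    using hnorm_complete[of kk] cauchy_if_near_minimizers[OF K _ kK kD[unfolded dist2_def]] D_le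
    unfolding hconv_def hnorm_def dist2_def by blast
  have LK: "L \<in> K" using cl kK L unfolding hclosed_def by blast
  have min: "dist2 L \<le> D"
    unfolding dist2_def by (rule limit_of_near_minimizers[OF L D0 kD[unfolded dist2_def]])
  have "orth K (y - L)" unfolding orth_def
  proof
    fix k assume k: "k \<in> K"
    show "cinner k (y - L) = 0"
    proof (rule orth_if_norm_minimal, rule allI)
      fix c
      have "D \<le> dist2 (L + scaleC c k)"
        using D_le LK k K csubspace_add csubspace_scaleC by blast
      thus "Re (cinner (y - L) (y - L)) \<le> Re (cinner (y - L - scaleC c k) (y - L - scaleC c k))"
        using min unfolding dist2_def by (simp add: diff_diff_eq)
    qed
  qed
  with LK show ?thesis by blast
qed

definition projK :: "'a::complex_inner set \<Rightarrow> 'a \<Rightarrow> 'a" where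
  "projK K y = (SOME v. v \<in> K \<and> orth K (y - v))"

definition lin :: "('a::complex_vector \<Rightarrow> 'a) \<Rightarrow> bool" where
  "lin T \<longleftrightarrow> (\<forall>x y. T (x + y) = T x + T y) \<and> (\<forall>c x. T (scaleC c x) = scaleC c (T x))"

definition herm :: "('a::complex_inner \<Rightarrow> 'a) \<Rightarrow> bool" where
  "herm T \<longleftrightarrow> (\<forall>x y. cinner (T x) y = cinner x (T y))"

lemma lin_add: "lin T \<Longrightarrow> T (x + y) = T x + T y"
  unfolding lin_def by blast

lemma lin_scaleC: "lin T \<Longrightarrow> T (scaleC c x) = scaleC c (T x)"
  unfolding lin_def by blast

lemma lin_zero: "lin T \<Longrightarrow> T 0 = 0"
  using lin_scaleC[of T 0 0] by simp

lemma lin_diff: "lin T \<Longrightarrow> T (x - y) = T x - T y"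
  using lin_add[of T x "-y"] lin_scaleC[of T "-1" y] by (simp add: scaleC_minus1)

lemma lin_compl: "lin T \<Longrightarrow> lin (\<lambda>y. y - T y)"
  unfolding lin_def by (simp add: scaleC_diff_right algebra_simps)

lemma herm_compl: "herm T \<Longrightarrow> herm (\<lambda>y. y - T y)"
  unfolding herm_def by (simp add: cinner_diff_left cinner_diff_right)

definition isproj :: "('a::complex_inner \<Rightarrow> 'a) \<Rightarrow> bool" where
  "isproj p \<longleftrightarrow> lin p \<and> herm p \<and> (\<forall>y. p (p y) = p y)"

lemma isproj_compl: "isproj p \<Longrightarrow> isproj (\<lambda>y. y - p y)"
  unfolding isproj_def using lin_compl herm_compl by (fastforce simp: lin_diff)

lemma isproj_cinner_self: "isproj p \<Longrightarrow> cinner (p y) y = cinner (p y) (p y)"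
  unfolding isproj_def herm_def by metis

lemma isproj_norm_le: "isproj p \<Longrightarrow> Re (cinner (p y) (p y)) \<le> Re (cinner y y)"
proof -
  assume p: "isproj p"
  have "cinner (p y) (y - p y) = 0" using isproj_cinner_self[OF p] by (simp add: cinner_diff_right)
  thus ?thesis
    using Re_cinner_self_add[of "p y" "y - p y"] cinner_self_nonneg[of "y - p y"] by simp
qed

locale closed_subspace =
  fixes K :: "'a::chilbert_space set"
  assumes subspace: "csubspace K" and closed: "hclosed K"
begin

lemma projK_spec: "projK K y \<in> K \<and> orth K (y - projK K y)"
  unfolding projK_def using someI_ex projection_exists[OF subspace closed] by (metis (mono_tags))

lemma projK_in: "projK K y \<in> K"
  using projK_spec by blast

lemma projK_orth: "orth K (y - projK K y)"
  using projK_spec by blast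

lemma projK_unique:
  assumes "v \<in> K" "orth K (y - v)"
  shows "projK K y = v"
proof -
  have "projK K y - v \<in> K" using csubspace_diff[OF subspace projK_in assms(1)] .
  moreover have "orth K (projK K y - v)"
    using orth_diff[OF assms(2) projK_orth[of y]] by simp
  ultimately show ?thesis using orth_in_eq_zero by fastforce
qed

lemma projK_fixes: "k \<in> K \<Longrightarrow> projK K k = k"
  by (rule projK_unique) (simp_all add: orth_zero)

lemma projK_eq_zero: "orth K y \<Longrightarrow> projK K y = 0"
  by (rule projK_unique) (simp_all add: csubspace_zero[OF subspace])

lemma projK_idem: "projK K (projK K y) = projK K y"
  by (rule projK_fixes[OF projK_in])

lemma lin_projK: "lin (projK K)"
  unfolding lin_def
proof (intro conjI allI)
  fix x y c
  show "projK K (x + y) = projK K x + projK K y"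
    using csubspace_add[OF subspace projK_in projK_in] orth_add[OF projK_orth[of x] projK_orth[of y]]
    by (intro projK_unique) (simp_all add: algebra_simps)
  show "projK K (scaleC c x) = scaleC c (projK K x)"
    using csubspace_scaleC[OF subspace projK_in] orth_scaleC[OF projK_orth[of x]]
    by (intro projK_unique) (simp_all add: scaleC_diff_right)
qed

lemma herm_projK: "herm (projK K)"
  unfolding herm_def
proof (intro allI)
  fix x y
  have "cinner (projK K x) (y - projK K y) = 0" and "cinner (x - projK K x) (projK K y) = 0"
    using projK_orth projK_in orth_cinner_left unfolding orth_def by blast+
  thus "cinner (projK K x) y = cinner x (projK K y)"
    by (simp add: cinner_diff_left cinner_diff_right)
qed

lemma isproj_projK: "isproj (projK K)"
  unfolding isproj_def using lin_projK herm_projK projK_idem by blast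

lemma projK_commute:
  assumes "lin T" "\<And>k. k \<in> K \<Longrightarrow> T k \<in> K" "\<And>w. orth K w \<Longrightarrow> orth K (T w)"
  shows "projK K (T y) = T (projK K y)"
proof (rule projK_unique)
  show "T (projK K y) \<in> K" using assms(2) projK_in by blast
  have "orth K (T (y - projK K y))" using assms(3) projK_orth by blast
  thus "orth K (T y - T (projK K y))" using assms(1) by (simp add: lin_diff)
qed

end

section \<open>Bounded operators\<close>

lemma bounded_op_lin: "bounded_op T \<Longrightarrow> lin T"
  unfolding bounded_op_def lin_def by blast

lemma sesquilinear_eq_zero:
  fixes B :: "'a::complex_vector \<Rightarrow> 'a \<Rightarrow> complex"
  assumes "\<And>x y z. B (x + y) z = B x z + B y z" "\<And>x y z. B x (y + z) = B x y + B x z"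
    and "\<And>c x y. B (scaleC c x) y = cnj c * B x y" "\<And>c x y. B x (scaleC c y) = c * B x y"
    and diag: "\<And>x. B x x = 0"
  shows "B x y = 0"
proof -
  \<comment> \<open>polarization along \<open>x + y\<close> and \<open>x + i y\<close>\<close>
  have "B x y + B y x = B (x + y) (x + y)" using assms(1,2) diag[of x] diag[of y] by simp
  hence sum: "B x y + B y x = 0" using diag by simp
  have "\<i> * B x y - \<i> * B y x = B (x + scaleC \<i> y) (x + scaleC \<i> y)"
    using assms(1-4) diag[of x] diag[of y] by simp
  hence "\<i> * (B x y - B y x) = 0" using diag by (simp add: right_diff_distrib)
  with sum show ?thesis by simp
qed

lemma lin_eq_zero_if_cinner_self:
  fixes T :: "'a::complex_inner \<Rightarrow> 'a"
  assumes "lin T" "\<And>x. cinner (T x) x = 0"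
  shows "T x = 0"
proof -
  have "cinner (T x) (T x) = 0"
    by (rule sesquilinear_eq_zero[where B="\<lambda>x y. cinner (T x) y"])
      (use assms in \<open>simp_all add: lin_add lin_scaleC cinner_add_left cinner_add_right
        cinner_scaleC_left cinner_scaleC_right\<close>)
  thus ?thesis using cinner_self_eq_zero by blast
qed

lemma herm_if_cinner_self_real:
  fixes T :: "'a::complex_inner \<Rightarrow> 'a"
  assumes "lin T" "\<And>x. Im (cinner (T x) x) = 0"
  shows "herm T"
  unfolding herm_def
proof (intro allI)
  fix x y
  have "cinner (T x) y - cinner x (T y) = 0"
  proof (rule sesquilinear_eq_zero[where B="\<lambda>x y. cinner (T x) y - cinner x (T y)"])
    fix x
    have "cinner x (T x) = cnj (cinner (T x) x)" by (rule cinner_commute)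
    also have "\<dots> = cinner (T x) x" using assms(2)[of x] by (simp add: complex_eq_iff)
    finally show "cinner (T x) x - cinner x (T x) = 0" by simp
  qed (use assms(1) in \<open>simp_all add: lin_add lin_scaleC cinner_add_left cinner_add_right
      cinner_scaleC_left cinner_scaleC_right algebra_simps\<close>)
  thus "cinner (T x) y = cinner x (T y)" by simp
qed

lemma op_pos_herm: "lin T \<Longrightarrow> op_pos T \<Longrightarrow> herm T"
  by (rule herm_if_cinner_self_real) (auto simp: op_pos_def)

lemma op_le_zero_iff: "op_le op_zero T \<longleftrightarrow> op_pos T"
  unfolding op_le_def op_sub_def op_zero_def by simp

lemma op_le_antisym:
  fixes A B :: "'a::chilbert_space \<Rightarrow> 'a"
  assumes "lin A" "lin B" "op_le A B" "op_le B A"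
  shows "A = B"
proof
  fix y
  have "lin (op_sub B A)"
    using assms(1,2) unfolding lin_def op_sub_def by (simp add: scaleC_diff_right algebra_simps)
  moreover have "cinner (op_sub B A x) x = 0" for x
  proof -
    have "Im (cinner (B x - A x) x) = 0" "0 \<le> Re (cinner (B x - A x) x)"
      "0 \<le> Re (cinner (A x - B x) x)"
      using assms(3,4) unfolding op_le_def op_pos_def op_sub_def by auto
    thus ?thesis unfolding op_sub_def by (simp add: complex_eq_iff cinner_diff_left)
  qed
  ultimately have "op_sub B A y = 0" by (rule lin_eq_zero_if_cinner_self)
  thus "A y = B y" unfolding op_sub_def by simp
qed

lemma adj_unique:
  fixes T :: "'a::complex_inner \<Rightarrow> 'a"
  assumes "\<forall>x y. cinner (T x) y = cinner x (S y)" "\<forall>x y. cinner (T x) y = cinner x (S' y)"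
  shows "S = S'"
proof
  fix y
  show "S y = S' y" using assms by (intro cinner_ext) (simp add: cinner_commute[of _ "S _"])
qed

lemma cinner_adj_if_exists:
  fixes T :: "'h::chilbert_space \<Rightarrow> 'h"
  assumes "\<exists>S. \<forall>x y. cinner (T x) y = cinner x (S y)"
  shows "cinner (T x) y = cinner x (adj T y)"
  unfolding adj_def using someI_ex[OF assms] by blast

lemma hconv_bounded_op:
  fixes T :: "'a::chilbert_space \<Rightarrow> 'a"
  assumes "bounded_op T" "hconv X L"
  shows "hconv (\<lambda>n. T (X n)) (T L)"
  unfolding hconv_def
proof (intro allI impI)
  fix e :: real
  assume e: "e > 0"
  obtain K where K: "\<And>x. hnorm (T x) \<le> K * hnorm x" using assms(1) unfolding bounded_op_def by blast
  define C where "C = \<bar>K\<bar> + 1"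
  have C: "C > 0" unfolding C_def by simp
  obtain N where N: "\<forall>n\<ge>N. hnorm (X n - L) < e / C"
    using assms(2) C e unfolding hconv_def by (meson divide_pos_pos)
  have "hnorm (T (X n) - T L) < e" if "n \<ge> N" for n
  proof -
    have "hnorm (T (X n) - T L) = hnorm (T (X n - L))"
      using bounded_op_lin[OF assms(1)] by (simp add: lin_diff)
    also have "\<dots> \<le> K * hnorm (X n - L)" by (rule K)
    also have "\<dots> \<le> C * hnorm (X n - L)"
      unfolding C_def using hnorm_nonneg[of "X n - L"] by (intro mult_right_mono) auto
    also have "\<dots> < C * (e / C)" using N that C by (intro mult_strict_left_mono) auto
    finally show ?thesis using C by simp
  qed
  thus "\<exists>N. \<forall>n\<ge>N. hnorm (T (X n) - T L) < e" by blast
qed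

lemma hconv_cinner:
  fixes y :: "'a::complex_inner"
  assumes "hconv X L" "e > 0"
  shows "\<exists>N. \<forall>n\<ge>N. cmod (cinner y (X n) - cinner y L) < e"
proof -
  define C where "C = hnorm y + 1"
  have C: "C > 0" unfolding C_def using hnorm_nonneg[of y] by simp
  obtain N where N: "\<forall>n\<ge>N. hnorm (X n - L) < e / C"
    using assms C unfolding hconv_def by (meson divide_pos_pos)
  have "cmod (cinner y (X n) - cinner y L) < e" if "n \<ge> N" for n
  proof -
    have "cmod (cinner y (X n) - cinner y L) \<le> hnorm y * hnorm (X n - L)"
      using cauchy_schwarz[of y "X n - L"] by (simp add: cinner_diff_right)
    also have "\<dots> \<le> C * hnorm (X n - L)"
      unfolding C_def using hnorm_nonneg[of "X n - L"] by (intro mult_right_mono) auto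
    also have "\<dots> < C * (e / C)" using N that C by (intro mult_strict_left_mono) auto
    finally show ?thesis using C by simp
  qed
  thus ?thesis by blast
qed

lemma hclosed_ker:
  fixes T :: "'a::chilbert_space \<Rightarrow> 'a"
  assumes "bounded_op T"
  shows "hclosed {z. T z = 0}"
  unfolding hclosed_def
proof (intro allI impI)
  fix X L
  assume X: "\<forall>n. X n \<in> {z. T z = 0}" and "hconv X L"
  hence "hconv (\<lambda>n. T (X n)) (T L)" using hconv_bounded_op[OF assms] by blast
  hence "hconv (\<lambda>n. 0) (T L)" using X by simp
  hence "\<forall>e>0. hnorm (T L) < e" unfolding hconv_def by (auto simp: hnorm_minus)
  hence "\<not> hnorm (T L) > 0" by blast
  hence "hnorm (T L) = 0" using hnorm_nonneg[of "T L"] by simp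
  thus "L \<in> {z. T z = 0}" by (simp add: hnorm_eq_zero)
qed

lemma closed_subspace_ker: "bounded_op (T::'a::chilbert_space \<Rightarrow> 'a) \<Longrightarrow> closed_subspace {z. T z = 0}"
  using hclosed_ker[of T] bounded_op_lin[of T]
  unfolding closed_subspace_def csubspace_def by (simp add: lin_zero lin_add lin_scaleC)

lemma riesz_representation:
  fixes f :: "'a::chilbert_space \<Rightarrow> complex"
  assumes add: "\<And>a b. f (a + b) = f a + f b" and scale: "\<And>c a. f (scaleC c a) = c * f a"
    and closed: "hclosed {z. f z = 0}"
  shows "\<exists>z. \<forall>x. f x = cinner z x"
proof (cases "\<forall>x. f x = 0")
  case True
  thus ?thesis by (intro exI[of _ 0]) simp
next
  case False
  define K where "K = {z. f z = 0}"
  have diff: "f (a - b) = f a - f b" for a b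
    using add[of a "-b"] scale[of "-1" b] by (simp add: scaleC_minus1)
  have "csubspace K" unfolding csubspace_def K_def using add scale diff[of 0 0] by simp
  with closed interpret closed_subspace K unfolding closed_subspace_def K_def by blast
  obtain z0 where z0: "f z0 \<noteq> 0" using False by blast
  \<comment> \<open>\<open>u\<close> spans the orthogonal complement of the kernel\<close>
  define u where "u = z0 - projK K z0"
  have fu: "f u \<noteq> 0" unfolding u_def using diff projK_in[of z0] z0 unfolding K_def by simp
  have "u \<noteq> 0" using fu scale[of 0 0] by auto
  hence uu: "cinner u u \<noteq> 0" using cinner_self_eq_zero by blast
  have key: "f x * cinner u u = f u * cinner u x" for x
  proof -
    have "scaleC (f x) u - scaleC (f u) x \<in> K" unfolding K_def by (simp add: diff scale mult.commute)
    hence "cinner u (scaleC (f x) u - scaleC (f u) x) = 0"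
      using projK_orth[of z0] orth_cinner_left unfolding u_def by blast
    thus ?thesis by (simp add: cinner_diff_right cinner_scaleC_right)
  qed
  have "f x = cinner (scaleC (cnj (f u / cinner u u)) u) x" for x
  proof -
    have "cinner (scaleC (cnj (f u / cinner u u)) u) x = (f u / cinner u u) * cinner u x"
      by (simp add: cinner_scaleC_left)
    also have "\<dots> = f x" using key[of x] uu by (simp add: field_simps)
    finally show ?thesis by simp
  qed
  thus ?thesis by blast
qed

lemma cinner_adj:
  fixes T :: "'a::chilbert_space \<Rightarrow> 'a"
  assumes T: "bounded_op T"
  shows "cinner (T x) y = cinner x (adj T y)"
proof (rule cinner_adj_if_exists)
  have lT: "lin T" using bounded_op_lin[OF T] .
  have "\<exists>z. \<forall>x. cinner y (T x) = cinner z x" for y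
  proof (rule riesz_representation)
    show "hclosed {x. cinner y (T x) = 0}"
      unfolding hclosed_def
    proof (intro allI impI)
      fix X L
      assume X: "\<forall>n. X n \<in> {x. cinner y (T x) = 0}" and "hconv X L"
      hence TX: "hconv (\<lambda>n. T (X n)) (T L)" using hconv_bounded_op[OF T] by blast
      have "\<forall>e>0. cmod (cinner y (T L)) < e"
      proof (intro allI impI)
        fix e :: real
        assume "e > 0"
        then obtain N where "\<forall>n\<ge>N. cmod (cinner y (T (X n)) - cinner y (T L)) < e"
          using hconv_cinner[OF TX] by blast
        thus "cmod (cinner y (T L)) < e" using X by auto
      qed
      thus "L \<in> {x. cinner y (T x) = 0}" by (metis less_irrefl zero_less_norm_iff mem_Collect_eq)
    qed
  qed (use lT in \<open>simp_all add: lin_add lin_scaleC cinner_add_right cinner_scaleC_right\<close>)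
  then obtain S where "\<And>y x. cinner y (T x) = cinner (S y) x" by metis
  hence "\<forall>x y. cinner (T x) y = cinner x (S y)" by (metis cinner_commute)
  thus "\<exists>S. \<forall>x y. cinner (T x) y = cinner x (S y)" by blast
qed

lemma adj_herm:
  assumes "bounded_op T" "herm T"
  shows "adj T = T"
  using adj_unique[of T "adj T" T] cinner_adj[OF assms(1)] assms(2) unfolding herm_def by blast

text \<open>Operators commuting with a self-adjoint \<open>x\<close> leave both \<open>ker x\<close> and its orthogonal
  complement invariant; the latter because their adjoints commute with \<open>x\<close> as well.\<close>

lemma projK_ker_commute:
  fixes x T :: "'a::chilbert_space \<Rightarrow> 'a"
  assumes x: "bounded_op x" "herm x" and T: "bounded_op T" and Tx: "\<And>u. T (x u) = x (T u)"
  shows "projK {z. x z = 0} (T y) = T (projK {z. x z = 0} y)"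
proof -
  interpret closed_subspace "{z. x z = 0}" using closed_subspace_ker[OF x(1)] .
  have lT: "lin T" using bounded_op_lin[OF T] .
  have adjT_x: "x (adj T v) = adj T (x v)" for v
  proof (rule cinner_ext)
    fix u
    have "cinner u (x (adj T v)) = cinner (T (x u)) v"
      using x(2) unfolding herm_def by (simp add: cinner_adj[OF T])
    also have "\<dots> = cinner u (adj T (x v))"
      using x(2) unfolding herm_def by (simp add: Tx cinner_adj[OF T])
    finally show "cinner u (x (adj T v)) = cinner u (adj T (x v))" .
  qed
  have adjT_0: "adj T 0 = 0" by (rule cinner_ext) (simp add: cinner_adj[OF T, symmetric])
  show ?thesis
  proof (rule projK_commute[OF lT])
    fix k
    assume "k \<in> {z. x z = 0}"
    thus "T k \<in> {z. x z = 0}" using Tx[of k] lin_zero[OF lT] by simp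
  next
    fix w
    assume w: "orth {z. x z = 0} w"
    show "orth {z. x z = 0} (T w)"
      unfolding orth_def
    proof
      fix k
      assume "k \<in> {z. x z = 0}"
      hence "adj T k \<in> {z. x z = 0}" using adjT_x[of k] adjT_0 by simp
      hence "cinner w (adj T k) = 0" using w orth_cinner_left by blast
      thus "cinner k (T w) = 0" by (metis cinner_adj[OF T] cinner_eq_zero_sym)
    qed
  qed
qed

section \<open>Projections and positive operators\<close>

lemma bounded_op_isproj: "isproj p \<Longrightarrow> bounded_op p"
  unfolding bounded_op_def
proof (intro conjI)
  assume p: "isproj p"
  thus "\<forall>x y. p (x + y) = p x + p y" "\<forall>c x. p (scaleC c x) = scaleC c (p x)"
    unfolding isproj_def lin_def by blast+
  have "hnorm (p y) \<le> 1 * hnorm y" for y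
    using isproj_norm_le[OF p, of y] unfolding hnorm_def by simp
  thus "\<exists>K. \<forall>x. hnorm (p x) \<le> K * hnorm x" by blast
qed

lemma isproj_le_if_absorbs:
  fixes p q :: "'a::chilbert_space \<Rightarrow> 'a"
  assumes p: "isproj p" and q: "isproj q" and qp: "\<And>y. q (p y) = p y"
  shows "op_le p q"
proof -
  have hp: "herm p" and hq: "herm q" using p q unfolding isproj_def by blast+
  have pq: "p (q y) = p y" for y
  proof (rule cinner_ext)
    fix u
    show "cinner u (p (q y)) = cinner u (p y)"
      using hp hq qp unfolding herm_def by metis
  qed
  show ?thesis
    unfolding op_le_def op_pos_def op_sub_def
  proof (intro allI conjI)
    fix y
    have eq: "cinner (q y - p y) y = cinner (q y) (q y) - cinner (p y) (p y)"
      using isproj_cinner_self[OF p] isproj_cinner_self[OF q] by (simp add: cinner_diff_left)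
    show "Im (cinner (q y - p y) y) = 0"
      unfolding eq by (simp add: cinner_self_real)
    show "0 \<le> Re (cinner (q y - p y) y)"
      unfolding eq using isproj_norm_le[OF p, of "q y"] pq by simp
  qed
qed

lemma op_pos_cinner_self_eq_zero:
  fixes c :: "'a::chilbert_space \<Rightarrow> 'a"
  assumes lc: "lin c" and pc: "op_pos c" and w: "cinner (c w) w = 0"
  shows "c w = 0"
proof -
  have hc: "herm c" using op_pos_herm[OF lc pc] .
  \<comment> \<open>\<open>t \<mapsto> \<langle>c (w + t v), w + t v\<rangle>\<close> is a nonnegative real quadratic vanishing at \<open>t = 0\<close>\<close>
  have Re0: "Re (cinner (c w) v) = 0" for v
  proof (rule linear_coeff_zero_if_nonneg, rule allI)
    fix t :: real
    have "0 \<le> Re (cinner (c (w + scaleC t v)) (w + scaleC t v))"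
      using pc unfolding op_pos_def by blast
    also have "cinner (c (w + scaleC t v)) (w + scaleC t v) =
        cinner (c w) w + t * cinner (c w) v + t * cinner (c v) w + t * t * cinner (c v) v"
      using lc by (simp add: lin_add lin_scaleC cinner_add_left cinner_add_right
          cinner_scaleC_left cinner_scaleC_right algebra_simps)
    also have "cinner (c v) w = cnj (cinner (c w) v)"
      using hc unfolding herm_def by (metis cinner_commute)
    finally show "0 \<le> 2 * t * Re (cinner (c w) v) + t^2 * Re (cinner (c v) v)"
      using w by (simp add: power2_eq_square)
  qed
  have "cinner (c w) v = 0" for v
    using Re0[of v] Re0[of "scaleC \<i> v"] by (simp add: cinner_scaleC_right complex_eq_iff)
  thus ?thesis using cinner_self_eq_zero by blast
qed

lemma le_isproj_absorbs:
  fixes c p :: "'a::chilbert_space \<Rightarrow> 'a"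
  assumes lc: "lin c" and c0: "op_le op_zero c" and cp: "op_le c p" and p: "isproj p"
  shows "c (p y) = c y" and "p (c y) = c y"
proof -
  have lp: "lin p" and hp: "herm p" and pp: "\<And>y. p (p y) = p y" using p unfolding isproj_def by auto
  have pc: "op_pos c" using c0 by (simp add: op_le_zero_iff)
  have hc: "herm c" using op_pos_herm[OF lc pc] .
  \<comment> \<open>on \<open>ker p\<close> the form of \<open>c\<close> is squeezed between \<open>0\<close> and that of \<open>p\<close>, which vanishes\<close>
  have kill: "c (u - p u) = 0" for u
  proof (rule op_pos_cinner_self_eq_zero[OF lc pc])
    define w where "w = u - p u"
    have "p w = 0" unfolding w_def using lp pp by (simp add: lin_diff)
    moreover have "0 \<le> Re (cinner (p w - c w) w)"
      using cp unfolding op_le_def op_pos_def op_sub_def by blast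
    moreover have "Im (cinner (c w) w) = 0" "0 \<le> Re (cinner (c w) w)"
      using pc unfolding op_pos_def by auto
    ultimately show "cinner (c (u - p u)) (u - p u) = 0"
      unfolding w_def[symmetric] by (simp add: cinner_diff_left cinner_minus_left complex_eq_iff)
  qed
  show "c (p y) = c y" using kill[of y] lc by (simp add: lin_diff)
  show "p (c y) = c y"
  proof (rule cinner_ext)
    fix u
    have "cinner u (c y - p (c y)) = cinner (c (u - p u)) y"
      using hp hc unfolding herm_def by (simp add: cinner_diff_left cinner_diff_right)
    thus "cinner u (p (c y)) = cinner u (c y)" using kill by (simp add: cinner_diff_right)
  qed
qed

lemma compression_le_isproj:
  fixes b p :: "'a::chilbert_space \<Rightarrow> 'a"
  assumes b0: "op_le op_zero b" and b1: "op_le b id" and p: "isproj p"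
    and bp: "\<And>y. b (p y) = p (b y)"
  shows "op_le op_zero (b \<circ> p)" and "op_le (b \<circ> p) p"
proof -
  have hp: "herm p" and pp: "\<And>y. p (p y) = p y" using p unfolding isproj_def by auto
  have bp_p: "cinner (b (p y)) y = cinner (b (p y)) (p y)" for y
    using hp bp pp unfolding herm_def by metis
  have "op_pos b" using b0 by (simp add: op_le_zero_iff)
  thus "op_le op_zero (b \<circ> p)"
    unfolding op_le_zero_iff op_pos_def by (simp add: bp_p)
  have "cinner (p y - b (p y)) y = cinner (p y - b (p y)) (p y)" for y
    using bp_p isproj_cinner_self[OF p] by (simp add: cinner_diff_left)
  thus "op_le (b \<circ> p) p"
    using b1 unfolding op_le_def op_pos_def op_sub_def by simp
qed

section \<open>Range projections in a von Neumann algebra\<close>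

lemma vna_bounded_op: "von_neumann_algebra M \<Longrightarrow> A \<in> M \<Longrightarrow> bounded_op A"
  unfolding von_neumann_algebra_def by blast

lemma vna_lin: "von_neumann_algebra M \<Longrightarrow> A \<in> M \<Longrightarrow> lin A"
  using vna_bounded_op bounded_op_lin by blast

lemma vna_id: "von_neumann_algebra M \<Longrightarrow> id \<in> M"
  unfolding von_neumann_algebra_def by blast

lemma vna_comp: "von_neumann_algebra M \<Longrightarrow> A \<in> M \<Longrightarrow> B \<in> M \<Longrightarrow> A \<circ> B \<in> M"
  unfolding von_neumann_algebra_def by blast

lemma vna_sub: "von_neumann_algebra M \<Longrightarrow> A \<in> M \<Longrightarrow> B \<in> M \<Longrightarrow> op_sub A B \<in> M"
proof -
  assume M: "von_neumann_algebra M" "A \<in> M" "B \<in> M"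
  hence "op_add A (\<lambda>x. scaleC (-1) (B x)) \<in> M" unfolding von_neumann_algebra_def by blast
  thus ?thesis unfolding op_add_def op_sub_def by (simp add: scaleC_minus1)
qed

lemma vna_bicommutant:
  assumes "von_neumann_algebra M" "bounded_op P" "\<And>T. T \<in> commutant M \<Longrightarrow> P \<circ> T = T \<circ> P"
  shows "P \<in> M"
proof -
  have "P \<in> commutant (commutant M)" unfolding commutant_def[of "commutant M"] using assms(2,3) by auto
  thus ?thesis using assms(1) unfolding von_neumann_algebra_def by simp
qed

lemma is_proj_in_isproj:
  assumes "von_neumann_algebra M" "is_proj_in M q"
  shows "isproj q"
proof -
  have q: "q \<in> M" "q \<circ> q = q" "adj q = q" using assms(2) unfolding is_proj_in_def by auto
  have "herm q" unfolding herm_def using cinner_adj[OF vna_bounded_op[OF assms(1) q(1)]] q(3) by simp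
  thus ?thesis unfolding isproj_def using vna_lin[OF assms(1) q(1)] q(2) by (metis comp_apply)
qed

definition rproj :: "('a::chilbert_space \<Rightarrow> 'a) \<Rightarrow> 'a \<Rightarrow> 'a" where
  "rproj x = (\<lambda>y. y - projK {z. x z = 0} y)"

lemma isproj_rproj: "bounded_op x \<Longrightarrow> isproj (rproj x)"
  unfolding rproj_def
  using isproj_compl closed_subspace.isproj_projK[OF closed_subspace_ker] by blast

lemma apply_rproj: "bounded_op x \<Longrightarrow> x (rproj x y) = x y"
  unfolding rproj_def using closed_subspace.projK_in[OF closed_subspace_ker] bounded_op_lin
  by (fastforce simp: lin_diff)

lemma rproj_apply:
  assumes "bounded_op x" "herm x"
  shows "rproj x (x y) = x y"
proof -
  have "orth {z. x z = 0} (x y)"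
    unfolding orth_def
  proof
    fix k
    assume "k \<in> {z. x z = 0}"
    have "cinner k (x y) = cinner (x k) y" using assms(2) unfolding herm_def by simp
    thus "cinner k (x y) = 0" using \<open>k \<in> {z. x z = 0}\<close> by simp
  qed
  thus ?thesis unfolding rproj_def
    using closed_subspace.projK_eq_zero[OF closed_subspace_ker[OF assms(1)]] by simp
qed

lemma rproj_commute:
  assumes "bounded_op x" "herm x" "bounded_op T" "\<And>u. T (x u) = x (T u)"
  shows "rproj x (T y) = T (rproj x y)"
  unfolding rproj_def
  using projK_ker_commute[OF assms] bounded_op_lin[OF assms(3)] by (simp add: lin_diff)

lemma rproj_in_vna:
  assumes M: "von_neumann_algebra M" and x: "x \<in> M" "herm x"
  shows "rproj x \<in> M"
proof (rule vna_bicommutant[OF M bounded_op_isproj[OF isproj_rproj]])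
  show bx: "bounded_op x" using vna_bounded_op[OF M x(1)] .
  fix T
  assume "T \<in> commutant M"
  hence T: "bounded_op T" and "T \<circ> x = x \<circ> T" unfolding commutant_def using x(1) by auto
  hence "T (x u) = x (T u)" for u by (simp add: fun_eq_iff)
  thus "rproj x \<circ> T = T \<circ> rproj x"
    using rproj_commute[OF bx x(2) T] by (simp add: fun_eq_iff)
qed

lemma rproj_le:
  fixes x q :: "'a::chilbert_space \<Rightarrow> 'a"
  assumes bx: "bounded_op x" and hx: "herm x" and q: "isproj q" and qx: "q \<circ> x = x"
  shows "op_le (rproj x) q"
proof (rule isproj_le_if_absorbs[OF isproj_rproj[OF bx] q])
  interpret closed_subspace "{z. x z = 0}" using closed_subspace_ker[OF bx] .
  have lq: "lin q" and hq: "herm q" and qq: "\<And>u. q (q u) = q u" using q unfolding isproj_def by auto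
  have ker: "x (u - q u) = 0" for u
  proof (rule cinner_ext)
    fix z
    have "cinner z (x (u - q u)) = cinner (x z) u - cinner (q (x z)) u"
      using hx hq bounded_op_lin[OF bx] unfolding herm_def by (simp add: lin_diff cinner_diff_right)
    also have "q (x z) = x z" using qx by (simp add: fun_eq_iff)
    finally show "cinner z (x (u - q u)) = cinner z 0" by simp
  qed
  fix y
  define w where "w = rproj x y"
  have "w - q w \<in> {z. x z = 0}" using ker by simp
  moreover have "orth {z. x z = 0} w" unfolding w_def rproj_def by (rule projK_orth)
  ultimately have "cinner w (w - q w) = 0" using orth_cinner_left by blast
  moreover have "cinner (q w) (w - q w) = cinner w (q w - q (q w))"
    using hq lq unfolding herm_def by (simp add: lin_diff)
  hence "cinner (q w) (w - q w) = 0" by (simp add: qq)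
  ultimately have "cinner (w - q w) (w - q w) = 0" by (simp add: cinner_diff_left)
  hence "q w = w" using cinner_self_eq_zero by (metis eq_iff_diff_eq_0)
  thus "q (rproj x y) = rproj x y" unfolding w_def .
qed

lemma range_proj_eq_rproj:
  assumes M: "von_neumann_algebra M" and x: "x \<in> M" "herm x"
  shows "range_proj M x = rproj x"
  unfolding range_proj_def
proof (rule the_equality)
  have bx: "bounded_op x" using vna_bounded_op[OF M x(1)] .
  have P: "isproj (rproj x)" using isproj_rproj[OF bx] .
  have "rproj x \<circ> rproj x = rproj x" using P unfolding isproj_def by auto
  hence "is_proj_in M (rproj x)"
    unfolding is_proj_in_def using rproj_in_vna[OF M x] adj_herm bounded_op_isproj[OF P] P
    unfolding isproj_def by blast
  moreover have Px: "rproj x \<circ> x = x" using rproj_apply[OF bx x(2)] by auto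
  moreover have min: "op_le (rproj x) q" if "is_proj_in M q" "q \<circ> x = x" for q
    using rproj_le[OF bx x(2) is_proj_in_isproj[OF M that(1)] that(2)] .
  ultimately show "is_proj_in M (rproj x) \<and> rproj x \<circ> x = x \<and>
      (\<forall>q. is_proj_in M q \<and> q \<circ> x = x \<longrightarrow> op_le (rproj x) q)"
    by blast
  fix p
  assume p: "is_proj_in M p \<and> p \<circ> x = x \<and> (\<forall>q. is_proj_in M q \<and> q \<circ> x = x \<longrightarrow> op_le p q)"
  show "p = rproj x"
  proof (rule op_le_antisym)
    show "lin p" using p is_proj_in_isproj[OF M] unfolding isproj_def by blast
    show "lin (rproj x)" using P unfolding isproj_def by blast
    show "op_le p (rproj x)" using p \<open>is_proj_in M (rproj x)\<close> Px by blast
    show "op_le (rproj x) p" using p min by blast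
  qed
qed

section \<open>Commutation with a positive contraction\<close>

locale positive_contraction =
  fixes M :: "('h::chilbert_space \<Rightarrow> 'h) set" and a :: "'h \<Rightarrow> 'h"
  assumes vna: "von_neumann_algebra M" and a_in: "a \<in> M"
    and a_nonneg: "op_le op_zero a" and a_le_id: "op_le a id"
begin

abbreviation "s \<equiv> projK {z. op_sub id a z = 0}"
abbreviation "n \<equiv> projK {z. a z = 0}"
abbreviation "e \<equiv> op_sub a s"
abbreviation "r \<equiv> rproj e"

lemma bounded_a: "bounded_op a"
  using vna_bounded_op[OF vna a_in] .

lemma lin_a: "lin a"
  using bounded_op_lin[OF bounded_a] .

lemma herm_a: "herm a"
  using op_pos_herm[OF lin_a] a_nonneg by (simp add: op_le_zero_iff)

lemma compl_a_in: "op_sub id a \<in> M"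
  using vna_sub[OF vna vna_id[OF vna] a_in] .

lemma bounded_compl_a: "bounded_op (op_sub id a)"
  using vna_bounded_op[OF vna compl_a_in] .

lemma herm_compl_a: "herm (op_sub id a)"
  using herm_compl[OF herm_a] unfolding op_sub_def by simp

lemma compl_a_commute: "a (op_sub id a u) = op_sub id a (a u)"
  using lin_a unfolding op_sub_def by (simp add: lin_diff)

sublocale eig1: closed_subspace "{z. op_sub id a z = 0}"
  using closed_subspace_ker[OF bounded_compl_a] .

sublocale eig0: closed_subspace "{z. a z = 0}"
  using closed_subspace_ker[OF bounded_a] .

lemma supp_proj_eq: "supp_proj M a = s"
  unfolding supp_proj_def range_proj_eq_rproj[OF vna compl_a_in herm_compl_a]
  unfolding rproj_def op_sub_def[of id] by auto

lemma null_proj_eq: "null_proj M a = n"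
  unfolding null_proj_def range_proj_eq_rproj[OF vna a_in herm_a] rproj_def op_sub_def by auto

lemma s_in: "s \<in> M"
  using vna_sub[OF vna vna_id[OF vna] rproj_in_vna[OF vna compl_a_in herm_compl_a]] supp_proj_eq
  unfolding supp_proj_def range_proj_eq_rproj[OF vna compl_a_in herm_compl_a] by simp

lemma n_in: "n \<in> M"
  using vna_sub[OF vna vna_id[OF vna] rproj_in_vna[OF vna a_in herm_a]] null_proj_eq
  unfolding null_proj_def range_proj_eq_rproj[OF vna a_in herm_a] by simp

lemma as_part_eq: "as_part M a = e"
  unfolding as_part_def supp_proj_eq ..

lemma e_in: "e \<in> M"
  using vna_sub[OF vna a_in s_in] .

lemma bounded_e: "bounded_op e"
  using vna_bounded_op[OF vna e_in] .

lemma herm_e: "herm e"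
  using herm_a eig1.herm_projK unfolding herm_def op_sub_def
  by (simp add: cinner_diff_left cinner_diff_right)

lemma range_proj_e_eq: "range_proj M e = r"
  using range_proj_eq_rproj[OF vna e_in herm_e] .

lemma r_in: "r \<in> M"
  using rproj_in_vna[OF vna e_in herm_e] .

lemma isproj_r: "isproj r"
  using isproj_rproj[OF bounded_e] .

lemma a_s: "a (s y) = s y"
  using eig1.projK_in[of y] unfolding op_sub_def by simp

lemma a_n: "a (n y) = 0"
  using eig0.projK_in by blast

lemma s_a: "s (a y) = s y"
  by (simp only: projK_ker_commute[OF bounded_compl_a herm_compl_a bounded_a compl_a_commute] a_s)

lemma n_a: "n (a y) = 0"
  using projK_ker_commute[OF bounded_a herm_a bounded_a] a_n by simp

lemma eigenspaces_orth: "op_sub id a k = 0 \<Longrightarrow> a w = 0 \<Longrightarrow> cinner k w = 0"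
proof -
  assume "op_sub id a k = 0" "a w = 0"
  hence "cinner k w = cinner (a k) w" unfolding op_sub_def by simp
  also have "\<dots> = 0" using herm_a \<open>a w = 0\<close> unfolding herm_def by simp
  finally show ?thesis .
qed

lemma s_n: "s (n y) = 0"
  using eig1.projK_eq_zero eig0.projK_in eigenspaces_orth unfolding orth_def by blast

lemma n_s: "n (s y) = 0"
  using eig0.projK_eq_zero eig1.projK_in eigenspaces_orth cinner_eq_zero_sym
  unfolding orth_def by blast

lemma projK_ker_e: "projK {z. e z = 0} y = s y + n y"
proof (rule closed_subspace.projK_unique[OF closed_subspace_ker[OF bounded_e]])
  show "s y + n y \<in> {z. e z = 0}"
    using eig1.lin_projK eig1.projK_idem lin_a a_s a_n s_n unfolding op_sub_def by (simp add: lin_add)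
  show "orth {z. e z = 0} (y - (s y + n y))"
    unfolding orth_def
  proof
    fix m
    assume "m \<in> {z. e z = 0}"
    hence "a m = s m" unfolding op_sub_def by simp
    hence m0: "m - s m \<in> {z. a z = 0}" using lin_a a_s by (simp add: lin_diff)
    have m1: "s m \<in> {z. op_sub id a z = 0}" by (rule eig1.projK_in)
    have "cinner (s m) (y - s y) = 0" "cinner (s m) (n y) = 0"
      using m1 eig1.projK_orth eigenspaces_orth eig0.projK_in unfolding orth_def by blast+
    moreover have "cinner (m - s m) (y - n y) = 0" "cinner (m - s m) (s y) = 0"
      using m0 eig0.projK_orth eigenspaces_orth eig1.projK_in cinner_eq_zero_sym
      unfolding orth_def by blast+
    ultimately show "cinner m (y - (s y + n y)) = 0"
      using cinner_add_left[of "s m" "m - s m"] by (simp add: cinner_diff_right cinner_add_right)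
  qed
qed

lemma r_eq: "r y = y - s y - n y"
  unfolding rproj_def projK_ker_e by simp

lemma s_r: "s (r y) = 0"
  unfolding r_eq using eig1.lin_projK eig1.projK_idem s_n by (simp add: lin_diff)

lemma r_s: "r (s y) = 0"
  unfolding r_eq using eig1.projK_idem n_s by simp

lemma r_a: "r (a y) = e y"
proof -
  have "a y = e y + s y" unfolding op_sub_def by simp
  hence "r (a y) = r (e y) + r (s y)" using isproj_r unfolding isproj_def by (simp add: lin_add)
  thus ?thesis using rproj_apply[OF bounded_e herm_e] r_s by simp
qed

lemma commute_imp_decomposition:
  assumes b_in: "b \<in> M" and b0: "op_le op_zero b" and b1: "op_le b id" and ba: "b \<circ> a = a \<circ> b"
  shows "\<exists>b1\<in>M. \<exists>b2\<in>M. \<exists>b3\<in>M.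
    op_le op_zero b1 \<and> op_le b1 s \<and> op_le op_zero b2 \<and> op_le b2 r \<and>
    op_le op_zero b3 \<and> op_le b3 n \<and> b2 \<circ> e = e \<circ> b2 \<and> b = op_add (op_add b1 b2) b3"
proof -
  have bb: "bounded_op b" using vna_bounded_op[OF vna b_in] .
  have lb: "lin b" using bounded_op_lin[OF bb] .
  have b_a: "b (a y) = a (b y)" for y using ba by (simp add: fun_eq_iff)
  have b_s: "b (s y) = s (b y)" for y
    using projK_ker_commute[OF bounded_compl_a herm_compl_a bb] lb b_a
    unfolding op_sub_def by (simp add: lin_diff)
  have b_n: "b (n y) = n (b y)" for y
    using projK_ker_commute[OF bounded_a herm_a bb b_a] by simp
  have b_e: "b (e y) = e (b y)" for y
    using lb b_a b_s unfolding op_sub_def by (simp add: lin_diff)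
  have b_r: "b (r y) = r (b y)" for y
    using rproj_commute[OF bounded_e herm_e bb b_e, of y] by (rule sym)
  have "(b \<circ> r) \<circ> e = e \<circ> (b \<circ> r)"
    using rproj_apply[OF bounded_e herm_e] apply_rproj[OF bounded_e] b_e b_r
    by (simp add: fun_eq_iff)
  moreover have "b = op_add (op_add (b \<circ> s) (b \<circ> r)) (b \<circ> n)"
  proof
    fix y
    have "y = s y + r y + n y" unfolding r_eq by simp
    hence "b y = b (s y + r y + n y)" by simp
    thus "b y = op_add (op_add (b \<circ> s) (b \<circ> r)) (b \<circ> n) y"
      unfolding op_add_def using lb by (simp add: lin_add)
  qed
  ultimately show ?thesis
    using compression_le_isproj[OF b0 b1 eig1.isproj_projK b_s]
      compression_le_isproj[OF b0 b1 isproj_r b_r]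
      compression_le_isproj[OF b0 b1 eig0.isproj_projK b_n]
      vna_comp[OF vna b_in s_in] vna_comp[OF vna b_in r_in] vna_comp[OF vna b_in n_in]
    by blast
qed

lemma decomposition_imp_commute:
  assumes "c1 \<in> M" "op_le op_zero c1" "op_le c1 s"
    and "c2 \<in> M" "op_le op_zero c2" "op_le c2 r" and c2e: "c2 \<circ> e = e \<circ> c2"
    and "c3 \<in> M" "op_le op_zero c3" "op_le c3 n"
  shows "op_add (op_add c1 c2) c3 \<circ> a = a \<circ> op_add (op_add c1 c2) c3"
proof
  fix y
  have l1: "lin c1" and l2: "lin c2" and l3: "lin c3" using assms vna_lin[OF vna] by blast+
  note c1 = le_isproj_absorbs[OF l1 assms(2,3) eig1.isproj_projK]
  note c2 = le_isproj_absorbs[OF l2 assms(5,6) isproj_r]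
  note c3 = le_isproj_absorbs[OF l3 assms(9,10) eig0.isproj_projK]
  have "c1 (a y) = a (c1 y)"
    by (metis c1 s_a a_s)
  moreover have "c2 (a y) = a (c2 y)"
  proof -
    have "c2 (a y) = c2 (e y)" by (metis c2(1) r_a)
    also have "\<dots> = e (c2 y)" using c2e by (simp add: fun_eq_iff)
    also have "\<dots> = a (c2 y)" using s_r c2(2) unfolding op_sub_def by (metis diff_zero)
    finally show ?thesis .
  qed
  moreover have "c3 (a y) = a (c3 y)"
    by (metis c3 n_a a_n lin_zero[OF l3])
  ultimately show "(op_add (op_add c1 c2) c3 \<circ> a) y = (a \<circ> op_add (op_add c1 c2) c3) y"
    unfolding op_add_def using lin_a by (simp add: lin_add)
qed

end

theorem theorem2p5:
  fixes M :: "('h::chilbert_space \<Rightarrow> 'h) set" and a b :: "'h \<Rightarrow> 'h"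
  assumes "von_neumann_algebra M"
    and "a \<in> M" and "op_le op_zero a" and "op_le a id"
    and "b \<in> M" and "op_le op_zero b" and "op_le b id"
  shows "b \<circ> a = a \<circ> b \<longleftrightarrow>
    (\<exists>b1\<in>M. \<exists>b2\<in>M. \<exists>b3\<in>M.
       op_le op_zero b1 \<and> op_le b1 (supp_proj M a) \<and>
       op_le op_zero b2 \<and> op_le b2 (range_proj M (as_part M a)) \<and>
       op_le op_zero b3 \<and> op_le b3 (null_proj M a) \<and>
       b2 \<circ> as_part M a = as_part M a \<circ> b2 \<and>
       b = op_add (op_add b1 b2) b3)"
proof -
  interpret positive_contraction M a
    using assms(1-4) by unfold_locales
  show ?thesis
    unfolding supp_proj_eq null_proj_eq as_part_eq range_proj_e_eq
    using commute_imp_decomposition[OF assms(5-7)] decomposition_imp_commute by blast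
qed

end
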